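(* Let $p\in[1,\infty)$, $w$ a weight sequence, and let $A\subset L_{p,w}$ be bounded in $\|\cdot\|_{p,w}$. Then $A$ is equinormed with respect to $\{\|\cdot\|_{p,w,i}\}_{i\in\mathbb{N}}$ if and only if $$\forall\varepsilon>0\ \exists N\in\mathbb{N}\ \forall a\in A\ \forall i\ge N:\ \sum_{j=i+1}^\infty|a_j|^p\, w_{(\sigma^a)^{-1}_j}<\varepsilon.$$
   Context: A weight sequence is a sequence $w=(w_i)$ of positive reals with $w_1=1\ge w_2\ge\dots$, $w_i\to0$, and $\sum_i w_i=+\infty$. For a real sequence $a$, $\|a\|_{p,w}=\sup_{\sigma}\big(\sum_{i=1}^\infty |a_{\sigma_i}|^p w_i\big)^{1/p}$ over all permutations $\sigma$ of $\mathbb{N}$; $L_{p,w}$ is the set of real sequences with finite norm. $\|a\|_{p,w,i}=\|(a_1,\dots,a_i,0,0,\dots)\|_{p,w}$. $A$ is equinormed if $\forall\varepsilon>0\ \exists i\ \forall a\in A:\ \|a\|_{p,w}\le\|a\|_{p,w,i}+\varepsilon$. For $a\in L_{p,w}$, $\sigma^a:\mathbb{N}\to\mathbb{N}$ is defined recursively: $\sigma^a_i$ is the element $j$ of $\mathbb{N}\setminus\{\sigma^a_1,\dots,\sigma^a_{i-1}\}$ with $|a_j|$ maximal, taking the smallest such index in case of ties (well defined for $a\in L_{p,w}$, injective, with $|a_{\sigma^a_i}|$ nonincreasing). $(\sigma^a)^{-1}$ is its inverse on $\sigma^a(\mathbb{N})$, with the convention $w_{(\sigma^a)^{-1}_j}:=0$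 if $j\notin\sigma^a(\mathbb{N})$. *)

theory Defs
  imports "HOL-Analysis.Analysis"
begin

text \<open>Sequences are indexed from 0 (paper index k corresponds to Isabelle index k-1).\<close>

definition weight_seq :: "(nat \<Rightarrow> real) \<Rightarrow> bool" where
  "weight_seq w \<longleftrightarrow> w 0 = 1 \<and> (\<forall>i. w i > 0) \<and> decseq w \<and> w \<longlonglongrightarrow> 0
     \<and> \<not> summable w"

definition pw_normp :: "real \<Rightarrow> (nat \<Rightarrow> real) \<Rightarrow> (nat \<Rightarrow> real) \<Rightarrow> ennreal" where
  "pw_normp p w a = (SUP \<sigma>\<in>{\<sigma>::nat\<Rightarrow>nat. bij \<sigma>}. (\<Sum>i. ennreal (\<bar>a (\<sigma> i)\<bar> powr p * w i)))"

definition Lpw :: "real \<Rightarrow> (nat \<Rightarrow> real) \<Rightarrow> (nat \<Rightarrow> real) set" where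
  "Lpw p w = {a. pw_normp p w a < \<infinity>}"

text \<open>The norm (meaningful for elements of Lpw).\<close>
definition pw_norm :: "real \<Rightarrow> (nat \<Rightarrow> real) \<Rightarrow> (nat \<Rightarrow> real) \<Rightarrow> real" where
  "pw_norm p w a = (enn2real (pw_normp p w a)) powr (1 / p)"

text \<open>Truncated norm: norm of (a_1,...,a_i,0,0,...), i.e. Isabelle indices < i kept.\<close>
definition pw_norm_i :: "real \<Rightarrow> (nat \<Rightarrow> real) \<Rightarrow> nat \<Rightarrow> (nat \<Rightarrow> real) \<Rightarrow> real" where
  "pw_norm_i p w i a = pw_norm p w (\<lambda>j. if j < i then a j else 0)"

definition equinormed :: "real \<Rightarrow> (nat \<Rightarrow> real) \<Rightarrow> (nat \<Rightarrow> real) set \<Rightarrow> bool" where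
  "equinormed p w A \<longleftrightarrow>
     (\<forall>\<epsilon>>0. \<exists>i. \<forall>a\<in>A. pw_norm p w a \<le> pw_norm_i p w i a + \<epsilon>)"

text \<open>Greedy rearrangement sigma^a: list of the first i chosen indices.\<close>
fun sig_list :: "(nat \<Rightarrow> real) \<Rightarrow> nat \<Rightarrow> nat list" where
  "sig_list a 0 = []"
| "sig_list a (Suc i) = sig_list a i @
     [LEAST j. j \<notin> set (sig_list a i) \<and>
        (\<forall>k. k \<notin> set (sig_list a i) \<longrightarrow> \<bar>a k\<bar> \<le> \<bar>a j\<bar>)]"

definition sigma_a :: "(nat \<Rightarrow> real) \<Rightarrow> nat \<Rightarrow> nat" where
  "sigma_a a i = last (sig_list a (Suc i))"

text \<open>w_{(sigma^a)^{-1}_j}, with value 0 if j is not in the range of sigma^a.\<close>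
definition w_inv :: "(nat \<Rightarrow> real) \<Rightarrow> (nat \<Rightarrow> real) \<Rightarrow> nat \<Rightarrow> real" where
  "w_inv w a j = (if j \<in> range (sigma_a a) then w (inv (sigma_a a) j) else 0)"

end

theory Submission
  imports Defs "HOL-Combinatorics.Transposition"
begin

text \<open>
  For a sequence \<open>a\<close> tending to 0, the supremum defining \<open>\<parallel>a\<parallel>\<^sup>p\<close> is attained at the greedy
  rearrangement \<open>\<sigma>\<^sup>a\<close>: by Abel summation against the decreasing weights it suffices that the
  partial sums of the sorted values \<open>f\<^sub>k = \<bar>a (\<sigma>\<^sup>a k)\<bar>\<^sup>p\<close> dominate those of every other
  arrangement. In sorted form the tail in the theorem is \<open>\<Sum>\<^sub>k [\<sigma>\<^sup>a k \<ge> i] f\<^sub>k w\<^sub>k\<close>, and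
  equinormedness amounts to \<open>\<parallel>a\<parallel>\<^sup>p \<le> \<parallel>a\<parallel>\<^sub>i\<^sup>p + \<epsilon>\<close> uniformly on \<open>A\<close>, because \<open>x\<^sup>p\<close> is
  uniformly continuous on bounded sets and \<open>x\<^sup>1\<^sup>/\<^sup>p\<close> is subadditive.

  The tail at \<open>i\<close> bounds the defect \<open>\<parallel>a\<parallel>\<^sup>p - \<parallel>a\<parallel>\<^sub>i\<^sup>p\<close>, which gives one direction. For the
  other, split the tail terms at a level \<open>\<gamma>\<close>. The parts capped at \<open>\<gamma>\<close>, moved \<open>i\<^sub>1\<close> places
  later, fit behind the sorted truncation at \<open>i\<^sub>1\<close>, so their sum is at most the defect at \<open>i\<^sub>1\<close>,
  and undoing the shift costs at most \<open>\<gamma> i\<^sub>1\<close>. The excesses over \<open>\<gamma>\<close> occur only among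
  the first \<open>K\<close> sorted terms, with \<open>K\<close> uniform on \<open>A\<close> because \<open>A\<close> is bounded and \<open>\<Sum> w\<close>
  diverges; truncating at \<open>i\<^sub>2\<close> lowers \<open>\<parallel>a\<parallel>\<^sup>p\<close> by at least \<open>w\<^sub>K\<close> times the excesses
  located beyond \<open>i\<^sub>2\<close>.
\<close>

lemma suminf_ennreal_add:
  fixes f g :: "nat \<Rightarrow> real"
  assumes "\<And>k. 0 \<le> f k" and "\<And>k. 0 \<le> g k"
  shows "(\<Sum>k. ennreal (f k + g k)) = (\<Sum>k. ennreal (f k)) + (\<Sum>k. ennreal (g k))"
  using assms by (simp add: suminf_add)

lemma suminf_ennreal_eq_infsum:
  fixes H :: "nat \<Rightarrow> ennreal"
  shows "suminf H = infsum H UNIV"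
proof -
  have "H summable_on UNIV"
    by (rule nonneg_summable_on_complete) simp
  then have "H sums infsum H UNIV"
    by (intro has_sum_imp_sums has_sum_infsum)
  then show ?thesis
    by (rule sums_unique[symmetric])
qed

lemma suminf_ennreal_reindex:
  fixes H :: "nat \<Rightarrow> ennreal"
  assumes "inj s" and "\<And>j. j \<notin> range s \<Longrightarrow> H j = 0"
  shows "(\<Sum>k. H (s k)) = suminf H"
proof -
  have "(\<Sum>k. H (s k)) = infsum (H \<circ> s) UNIV"
    using suminf_ennreal_eq_infsum[of "H \<circ> s"] by (simp add: comp_def)
  also have "\<dots> = infsum H (range s)"
    using assms(1) by (simp add: infsum_reindex)
  also have "\<dots> = infsum H UNIV"
    using assms(2) by (intro infsum_cong_neutral) auto
  finally show ?thesis
    by (simp add: suminf_ennreal_eq_infsum)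
qed

section \<open>Greedy rearrangement\<close>

lemma finite_abs_ge_if_tendsto_zero:
  fixes a :: "nat \<Rightarrow> real"
  assumes "a \<longlonglongrightarrow> 0" and "0 < c"
  shows "finite {k. c \<le> \<bar>a k\<bar>}"
proof -
  obtain N where "\<And>k. N \<le> k \<Longrightarrow> \<bar>a k\<bar> < c"
    using assms by (auto simp: LIMSEQ_iff)
  then have "{k. c \<le> \<bar>a k\<bar>} \<subseteq> {..<N}"
    by (auto simp: not_le[symmetric])
  then show ?thesis
    by (rule finite_subset) simp
qed

lemma greedy_choice_exists:
  fixes a :: "nat \<Rightarrow> real"
  assumes "a \<longlonglongrightarrow> 0" and "finite L"
  shows "\<exists>j. j \<notin> L \<and> (\<forall>k. k \<notin> L \<longrightarrow> \<bar>a k\<bar> \<le> \<bar>a j\<bar>)"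
proof (cases "\<forall>k. k \<notin> L \<longrightarrow> a k = 0")
  case True
  obtain j where "j \<notin> L"
    using \<open>finite L\<close> ex_new_if_finite[OF infinite_UNIV_nat] by blast
  with True show ?thesis by auto
next
  case False
  then obtain j0 where j0: "j0 \<notin> L" "a j0 \<noteq> 0" by auto
  define M where "M = {k. k \<notin> L \<and> \<bar>a j0\<bar> \<le> \<bar>a k\<bar>}"
  have "finite M"
    using finite_abs_ge_if_tendsto_zero[OF assms(1), of "\<bar>a j0\<bar>"] j0(2)
    by (auto simp: M_def intro: finite_subset)
  moreover have "j0 \<in> M"
    using j0 by (simp add: M_def)
  ultimately obtain j where "j \<in> M" and "\<bar>a j\<bar> = Max ((\<lambda>k. \<bar>a k\<bar>) ` M)"
    using Max_in[of "(\<lambda>k. \<bar>a k\<bar>) ` M"] by fastforce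
  with \<open>finite M\<close> have "\<And>k. k \<in> M \<Longrightarrow> \<bar>a k\<bar> \<le> \<bar>a j\<bar>"
    by simp
  then show ?thesis
    using \<open>j \<in> M\<close> by (intro exI[of _ j]) (auto simp: M_def, meson linear order.trans)
qed

lemma set_sig_list: "set (sig_list a n) = sigma_a a ` {..<n}"
proof (induction n)
  case (Suc n)
  have "sig_list a (Suc n) = sig_list a n @ [sigma_a a n]"
    by (simp add: sigma_a_def)
  with Suc show ?case
    by (simp add: lessThan_Suc)
qed simp

lemma sigma_a_greedy:
  fixes a :: "nat \<Rightarrow> real"
  assumes "a \<longlonglongrightarrow> 0"
  shows "sigma_a a i \<notin> sigma_a a ` {..<i}"
    and "\<And>k. k \<notin> sigma_a a ` {..<i} \<Longrightarrow> \<bar>a k\<bar> \<le> \<bar>a (sigma_a a i)\<bar>"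
proof -
  let ?L = "set (sig_list a i)"
  let ?P = "\<lambda>j. j \<notin> ?L \<and> (\<forall>k. k \<notin> ?L \<longrightarrow> \<bar>a k\<bar> \<le> \<bar>a j\<bar>)"
  have "?P (LEAST j. ?P j)"
    by (rule LeastI_ex) (rule greedy_choice_exists[OF assms finite_set])
  moreover have "sigma_a a i = (LEAST j. ?P j)"
    by (simp add: sigma_a_def)
  ultimately show "sigma_a a i \<notin> sigma_a a ` {..<i}"
    and "\<And>k. k \<notin> sigma_a a ` {..<i} \<Longrightarrow> \<bar>a k\<bar> \<le> \<bar>a (sigma_a a i)\<bar>"
    by (simp_all add: set_sig_list)
qed

lemma inj_sigma_a:
  fixes a :: "nat \<Rightarrow> real"
  assumes "a \<longlonglongrightarrow> 0"
  shows "inj (sigma_a a)"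
proof (rule linorder_injI)
  fix x y :: nat
  assume "x < y"
  then have "sigma_a a x \<in> sigma_a a ` {..<y}"
    by simp
  with sigma_a_greedy(1)[OF assms, of y] show "sigma_a a x \<noteq> sigma_a a y"
    by metis
qed

lemma sigma_a_antimono:
  fixes a :: "nat \<Rightarrow> real"
  assumes "a \<longlonglongrightarrow> 0" and "i \<le> i'"
  shows "\<bar>a (sigma_a a i')\<bar> \<le> \<bar>a (sigma_a a i)\<bar>"
proof (rule sigma_a_greedy(2)[OF assms(1)])
  show "sigma_a a i' \<notin> sigma_a a ` {..<i}"
    using sigma_a_greedy(1)[OF assms(1), of i'] assms(2) by auto
qed

lemma nonzero_in_range_sigma_a:
  fixes a :: "nat \<Rightarrow> real"
  assumes "a \<longlonglongrightarrow> 0" and "a j \<noteq> 0"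
  shows "j \<in> range (sigma_a a)"
proof (rule ccontr)
  assume "j \<notin> range (sigma_a a)"
  then have "range (sigma_a a) \<subseteq> {k. \<bar>a j\<bar> \<le> \<bar>a k\<bar>}"
    using sigma_a_greedy(2)[OF assms(1)] by blast
  moreover have "finite {k. \<bar>a j\<bar> \<le> \<bar>a k\<bar>}"
    using finite_abs_ge_if_tendsto_zero[OF assms(1)] assms(2) by simp
  ultimately have "finite (range (sigma_a a))"
    by (rule finite_subset)
  then show False
    using inj_sigma_a[OF assms(1)] by (simp add: finite_image_iff)
qed

lemma sum_powr_le_sorted_prefix:
  fixes b :: "nat \<Rightarrow> real"
  assumes b0: "b \<longlonglongrightarrow> 0" and "0 \<le> p" and "finite U" and "card U \<le> n"
  shows "(\<Sum>j\<in>U. \<bar>b j\<bar> powr p) \<le> (\<Sum>k<n. \<bar>b (sigma_a b k)\<bar> powr p)"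
proof (cases "n = 0")
  case True
  with assms show ?thesis by simp
next
  case False
  define g where "g j = \<bar>b j\<bar> powr p" for j
  define G where "G = sigma_a b ` {..<n}"
  define c where "c = g (sigma_a b (n - 1))"
  have "finite G" and "card G = n"
    using inj_sigma_a[OF b0] by (simp_all add: G_def card_image inj_on_subset)
  have outside: "g j \<le> c" if "j \<notin> G" for j
  proof -
    have "j \<notin> sigma_a b ` {..<n - 1}"
      using that False by (auto simp: G_def)
    then show ?thesis
      unfolding g_def c_def using \<open>0 \<le> p\<close> by (intro powr_mono2 sigma_a_greedy(2)[OF b0]) auto
  qed
  have inside: "c \<le> g j" if "j \<in> G" for j
    using that \<open>0 \<le> p\<close> unfolding G_def g_def c_def
    by (auto intro!: powr_mono2 sigma_a_antimono[OF b0])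
  have "card (U - G) \<le> card (G - U)"
    using card_Int_Diff[OF \<open>finite U\<close>, of G] card_Int_Diff[OF \<open>finite G\<close>, of U] assms(4) \<open>card G = n\<close>
    by (simp add: Int_commute)
  then have "(\<Sum>j\<in>U - G. g j) \<le> (\<Sum>j\<in>G - U. g j)"
  proof -
    assume card_le: "card (U - G) \<le> card (G - U)"
    have "(\<Sum>j\<in>U - G. g j) \<le> card (U - G) * c"
      using sum_bounded_above[of "U - G" g c] outside by auto
    also have "\<dots> \<le> card (G - U) * c"
      using card_le by (intro mult_right_mono) (simp_all add: c_def g_def)
    also have "\<dots> \<le> (\<Sum>j\<in>G - U. g j)"
      using sum_bounded_below[of "G - U" c g] inside by auto
    finally show ?thesis .
  qed
  then have "(\<Sum>j\<in>U. g j) \<le> (\<Sum>j\<in>G. g j)"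
    using sum.Int_Diff[OF \<open>finite U\<close>, of g G] sum.Int_Diff[OF \<open>finite G\<close>, of g U]
    by (simp add: Int_commute)
  also have "\<dots> = (\<Sum>k<n. g (sigma_a b k))"
    unfolding G_def using inj_sigma_a[OF b0] by (simp add: sum.reindex inj_on_subset)
  finally show ?thesis
    by (simp add: g_def)
qed

lemma sorted_abs_le_if_abs_le:
  fixes a b :: "nat \<Rightarrow> real"
  assumes a0: "a \<longlonglongrightarrow> 0" and b0: "b \<longlonglongrightarrow> 0" and le: "\<And>j. \<bar>b j\<bar> \<le> \<bar>a j\<bar>"
  shows "\<bar>b (sigma_a b k)\<bar> \<le> \<bar>a (sigma_a a k)\<bar>"
proof -
  have "card (sigma_a b ` {..k}) = Suc k"
    using inj_sigma_a[OF b0] by (simp add: card_image inj_on_subset)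
  moreover have "card (sigma_a a ` {..<k}) \<le> k"
    using card_image_le[of "{..<k}" "sigma_a a"] by simp
  ultimately have "\<not> sigma_a b ` {..k} \<subseteq> sigma_a a ` {..<k}"
    by (metis card_mono finite_imageI finite_lessThan not_less_eq_eq)
  then obtain k' where "k' \<le> k" and k': "sigma_a b k' \<notin> sigma_a a ` {..<k}"
    by auto
  have "\<bar>b (sigma_a b k)\<bar> \<le> \<bar>b (sigma_a b k')\<bar>"
    by (rule sigma_a_antimono[OF b0 \<open>k' \<le> k\<close>])
  also have "\<dots> \<le> \<bar>a (sigma_a b k')\<bar>"
    by (rule le)
  also have "\<dots> \<le> \<bar>a (sigma_a a k)\<bar>"
    by (rule sigma_a_greedy(2)[OF a0 k'])
  finally show ?thesis .
qed

section \<open>The norm as a sorted weighted sum\<close>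

lemma weighted_sum_le_if_partial_sums_le:
  fixes c e w :: "nat \<Rightarrow> real"
  assumes "decseq w" and "\<And>k. 0 \<le> w k" and "\<And>m. (\<Sum>k<m. c k) \<le> (\<Sum>k<m. e k)"
  shows "(\<Sum>k<n. c k * w k) \<le> (\<Sum>k<n. e k * w k)"
proof -
  define x where "x k = e k - c k" for k
  have partial_nonneg: "0 \<le> (\<Sum>k<m. x k)" for m
    using assms(3)[of m] by (simp add: x_def sum_subtractf)
  have summation_by_parts:
    "(\<Sum>k<n. x k * w k) = (\<Sum>m<n. (\<Sum>k<Suc m. x k) * (w m - w (Suc m))) + (\<Sum>k<n. x k) * w n"
    by (induction n) (simp_all add: algebra_simps)
  have "0 \<le> (\<Sum>k<Suc m. x k) * (w m - w (Suc m))" for m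
    using partial_nonneg[of "Suc m"] decseq_SucD[OF assms(1), of m] by (intro mult_nonneg_nonneg) auto
  then have "0 \<le> (\<Sum>k<n. x k * w k)"
    unfolding summation_by_parts using partial_nonneg[of n] assms(2)[of n]
    by (intro add_nonneg_nonneg sum_nonneg) auto
  then show ?thesis
    by (simp add: x_def algebra_simps sum_subtractf)
qed

lemma suminf_weighted_le_if_partial_sums_le:
  fixes c e w :: "nat \<Rightarrow> real"
  assumes "decseq w" and "\<And>k. 0 \<le> w k" and "\<And>k. 0 \<le> c k" and "\<And>k. 0 \<le> e k"
    and "\<And>m. (\<Sum>k<m. c k) \<le> (\<Sum>k<m. e k)"
  shows "(\<Sum>k. ennreal (c k * w k)) \<le> (\<Sum>k. ennreal (e k * w k))"
  unfolding suminf_eq_SUP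
proof (rule SUP_mono)
  fix n
  have "(\<Sum>k<n. ennreal (c k * w k)) \<le> (\<Sum>k<n. ennreal (e k * w k))"
    using weighted_sum_le_if_partial_sums_le[of w c e n] assms
    by (simp add: sum_ennreal ennreal_leI)
  then show "\<exists>m\<in>UNIV. (\<Sum>k<n. ennreal (c k * w k)) \<le> (\<Sum>k<m. ennreal (e k * w k))"
    by blast
qed

lemma exists_bij_agreeing_on_prefix:
  fixes \<tau> :: "nat \<Rightarrow> nat"
  assumes "inj \<tau>"
  shows "\<exists>\<pi>. bij \<pi> \<and> (\<forall>i<M. \<pi> i = \<tau> i)"
proof (induction M)
  case 0
  show ?case
    using bij_id by blast
next
  case (Suc M)
  then obtain \<pi> where "bij \<pi>" and agree: "\<forall>i<M. \<pi> i = \<tau> i"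
    by blast
  define y where "y = inv \<pi> (\<tau> M)"
  have "\<pi> y = \<tau> M"
    unfolding y_def using \<open>bij \<pi>\<close> by (simp add: bij_is_surj surj_f_inv_f)
  have "M \<le> y"
  proof (rule ccontr)
    assume "\<not> M \<le> y"
    with agree \<open>\<pi> y = \<tau> M\<close> have "\<tau> y = \<tau> M"
      by simp
    with \<open>\<not> M \<le> y\<close> assms show False
      by (simp add: inj_eq)
  qed
  have "bij (\<pi> \<circ> Transposition.transpose M y)"
    using \<open>bij \<pi>\<close> by (simp add: bij_comp)
  moreover have "\<forall>i<Suc M. (\<pi> \<circ> Transposition.transpose M y) i = \<tau> i"
    using agree \<open>\<pi> y = \<tau> M\<close> \<open>M \<le> y\<close> by (auto simp: less_Suc_eq Transposition.transpose_def)
  ultimately show ?case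
    by blast
qed

lemma suminf_inj_le_pw_normp:
  assumes "inj \<tau>"
  shows "(\<Sum>i. ennreal (\<bar>a (\<tau> i)\<bar> powr p * w i)) \<le> pw_normp p w a"
  unfolding suminf_eq_SUP
proof (rule SUP_least)
  fix M
  obtain \<pi> where "bij \<pi>" and agree: "\<forall>i<M. \<pi> i = \<tau> i"
    using exists_bij_agreeing_on_prefix[OF assms] by blast
  have "(\<Sum>i<M. ennreal (\<bar>a (\<tau> i)\<bar> powr p * w i)) = (\<Sum>i<M. ennreal (\<bar>a (\<pi> i)\<bar> powr p * w i))"
    using agree by simp
  also have "\<dots> \<le> (\<Sum>i. ennreal (\<bar>a (\<pi> i)\<bar> powr p * w i))"
    by (intro sum_le_suminf summableI) auto
  also have "\<dots> \<le> pw_normp p w a"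
    unfolding pw_normp_def using \<open>bij \<pi>\<close> by (intro SUP_upper) simp
  finally show "(\<Sum>i<M. ennreal (\<bar>a (\<tau> i)\<bar> powr p * w i)) \<le> pw_normp p w a" .
qed

lemma pw_normp_eq_sorted:
  fixes a :: "nat \<Rightarrow> real"
  assumes a0: "a \<longlonglongrightarrow> 0" and "0 \<le> p" and "decseq w" and "\<And>k. 0 \<le> w k"
  shows "pw_normp p w a = (\<Sum>k. ennreal (\<bar>a (sigma_a a k)\<bar> powr p * w k))"
proof (rule antisym)
  show "pw_normp p w a \<le> (\<Sum>k. ennreal (\<bar>a (sigma_a a k)\<bar> powr p * w k))"
    unfolding pw_normp_def
  proof (rule SUP_least)
    fix \<pi> :: "nat \<Rightarrow> nat"
    assume "\<pi> \<in> {\<pi>. bij \<pi>}"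
    then have "inj \<pi>"
      by (simp add: bij_is_inj)
    show "(\<Sum>i. ennreal (\<bar>a (\<pi> i)\<bar> powr p * w i)) \<le> (\<Sum>k. ennreal (\<bar>a (sigma_a a k)\<bar> powr p * w k))"
    proof (rule suminf_weighted_le_if_partial_sums_le[OF assms(3,4)])
      fix m
      have "(\<Sum>k<m. \<bar>a (\<pi> k)\<bar> powr p) = (\<Sum>j\<in>\<pi> ` {..<m}. \<bar>a j\<bar> powr p)"
        using \<open>inj \<pi>\<close> by (simp add: sum.reindex inj_on_subset)
      also have "\<dots> \<le> (\<Sum>k<m. \<bar>a (sigma_a a k)\<bar> powr p)"
        using \<open>inj \<pi>\<close> \<open>0 \<le> p\<close>
        by (intro sum_powr_le_sorted_prefix[OF a0]) (simp_all add: card_image inj_on_subset)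
      finally show "(\<Sum>k<m. \<bar>a (\<pi> k)\<bar> powr p) \<le> (\<Sum>k<m. \<bar>a (sigma_a a k)\<bar> powr p)" .
    qed simp_all
  qed
  show "(\<Sum>k. ennreal (\<bar>a (sigma_a a k)\<bar> powr p * w k)) \<le> pw_normp p w a"
    by (rule suminf_inj_le_pw_normp[OF inj_sigma_a[OF a0]])
qed

lemma pw_normp_mono:
  assumes "\<And>j. \<bar>b j\<bar> \<le> \<bar>a j\<bar>" and "0 \<le> p" and "\<And>k. 0 \<le> w k"
  shows "pw_normp p w b \<le> pw_normp p w a"
  unfolding pw_normp_def
proof (rule SUP_mono)
  fix \<pi> :: "nat \<Rightarrow> nat"
  assume "\<pi> \<in> {\<pi>. bij \<pi>}"
  moreover have "(\<Sum>i. ennreal (\<bar>b (\<pi> i)\<bar> powr p * w i)) \<le> (\<Sum>i. ennreal (\<bar>a (\<pi> i)\<bar> powr p * w i))"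
    using assms by (intro suminf_le ennreal_leI mult_right_mono powr_mono2) auto
  ultimately show "\<exists>\<pi>'\<in>{\<pi>. bij \<pi>}. (\<Sum>i. ennreal (\<bar>b (\<pi> i)\<bar> powr p * w i))
      \<le> (\<Sum>i. ennreal (\<bar>a (\<pi>' i)\<bar> powr p * w i))"
    by blast
qed

lemma weight_seqD:
  assumes "weight_seq w"
  shows "\<And>k. 0 < w k" and "decseq w" and "\<And>k. w k \<le> 1" and "\<not> summable w"
  using assms unfolding weight_seq_def by (metis decseq_def le0)+

lemma Lpw_imp_tendsto_zero:
  assumes "weight_seq w" and "0 < p" and "a \<in> Lpw p w"
  shows "a \<longlonglongrightarrow> 0"
proof (rule ccontr)
  assume "\<not> a \<longlonglongrightarrow> 0"
  then obtain r where "0 < r" and "\<And>N. \<exists>n\<ge>N. r \<le> \<bar>a n\<bar>"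
    unfolding LIMSEQ_iff by (auto simp: not_less)
  then have D: "infinite {n. r \<le> \<bar>a n\<bar>}" (is "infinite ?D")
    by (simp add: infinite_nat_iff_unbounded_le)
  have w_nonneg: "\<And>k. 0 \<le> w k"
    using weight_seqD(1)[OF assms(1)] less_imp_le by blast
  have "(\<Sum>i. ennreal (r powr p * w i)) \<le> (\<Sum>i. ennreal (\<bar>a (enumerate ?D i)\<bar> powr p * w i))"
    using enumerate_in_set[OF D] \<open>0 < r\<close> \<open>0 < p\<close> w_nonneg
    by (intro suminf_le ennreal_leI mult_right_mono powr_mono2) auto
  also have "\<dots> \<le> pw_normp p w a"
    by (rule suminf_inj_le_pw_normp[OF inj_enumerate[OF D]])
  also have "\<dots> < \<infinity>"
    using assms(3) by (simp add: Lpw_def)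
  finally have "summable (\<lambda>i. r powr p * w i)"
    using summable_iff_suminf_neq_top[of "\<lambda>i. r powr p * w i"] w_nonneg by fastforce
  with \<open>0 < r\<close> weight_seqD(4)[OF assms(1)] show False
    by (simp add: summable_cmult_iff)
qed

definition trunc :: "nat \<Rightarrow> (nat \<Rightarrow> real) \<Rightarrow> nat \<Rightarrow> real" where
  "trunc i a = (\<lambda>j. if j < i then a j else 0)"

lemma pw_norm_i_eq_trunc: "pw_norm_i p w i a = pw_norm p w (trunc i a)"
  by (simp add: pw_norm_i_def trunc_def)

lemma abs_trunc_le: "\<bar>trunc i a j\<bar> \<le> \<bar>a j\<bar>"
  by (simp add: trunc_def)

lemma pw_normp_trunc_le:
  assumes "0 \<le> p" and "\<And>k. 0 \<le> w k"
  shows "pw_normp p w (trunc i a) \<le> pw_normp p w a"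
  using assms by (intro pw_normp_mono) (simp_all add: trunc_def)

lemma trunc_tendsto_zero: "trunc i a \<longlonglongrightarrow> 0"
proof (rule tendsto_eventually)
  show "\<forall>\<^sub>F j in sequentially. trunc i a j = 0"
    unfolding eventually_sequentially trunc_def by (intro exI[of _ i]) simp
qed

lemma trunc_sigma_a_eq_zero:
  assumes "i \<le> k"
  shows "trunc i a (sigma_a (trunc i a) k) = 0"
proof (rule ccontr)
  let ?t = "trunc i a"
  assume nonzero: "?t (sigma_a ?t k) \<noteq> 0"
  have "sigma_a ?t ` {..k} \<subseteq> {..<i}"
  proof
    fix j
    assume "j \<in> sigma_a ?t ` {..k}"
    then have "\<bar>?t (sigma_a ?t k)\<bar> \<le> \<bar>?t j\<bar>"
      using sigma_a_antimono[OF trunc_tendsto_zero] by auto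
    with nonzero show "j \<in> {..<i}"
      by (auto simp: trunc_def split: if_splits)
  qed
  then have "card (sigma_a ?t ` {..k}) \<le> i"
    by (metis card_lessThan card_mono finite_lessThan)
  moreover have "card (sigma_a ?t ` {..k}) = Suc k"
    using inj_sigma_a[OF trunc_tendsto_zero[of i a]] by (simp add: card_image inj_on_subset)
  ultimately show False
    using assms by simp
qed

lemma pw_normp_trunc_eq_sum:
  assumes "0 \<le> p" and "decseq w" and "\<And>k. 0 \<le> w k"
  shows "pw_normp p w (trunc i a) = (\<Sum>k<i. ennreal (\<bar>trunc i a (sigma_a (trunc i a) k)\<bar> powr p * w k))"
proof -
  let ?f = "\<lambda>k. ennreal (\<bar>trunc i a (sigma_a (trunc i a) k)\<bar> powr p * w k)"
  have "pw_normp p w (trunc i a) = suminf ?f"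
    by (rule pw_normp_eq_sorted[OF trunc_tendsto_zero assms])
  also have "\<dots> = (\<Sum>k. ?f (k + i)) + (\<Sum>k<i. ?f k)"
    by (intro suminf_offset summableI)
  finally show ?thesis
    by (simp add: trunc_sigma_a_eq_zero)
qed

lemma tail_sum_eq_sorted_tail:
  fixes a :: "nat \<Rightarrow> real"
  assumes "a \<longlonglongrightarrow> 0"
  shows "(\<Sum>j. ennreal (\<bar>a (j + i)\<bar> powr p * w_inv w a (j + i)))
       = (\<Sum>k. ennreal (if i \<le> sigma_a a k then \<bar>a (sigma_a a k)\<bar> powr p * w k else 0))"
proof -
  define H where "H j = ennreal (if i \<le> j then \<bar>a j\<bar> powr p * w_inv w a j else 0)" for j
  have "(\<Sum>j. ennreal (\<bar>a (j + i)\<bar> powr p * w_inv w a (j + i))) = (\<Sum>j. H (j + i))"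
    by (simp add: H_def)
  also have "\<dots> = suminf H"
    using suminf_offset[of H i] by (simp add: H_def summableI)
  also have "\<dots> = (\<Sum>k. H (sigma_a a k))"
    by (rule suminf_ennreal_reindex[symmetric]) (simp_all add: H_def w_inv_def inj_sigma_a[OF assms])
  also have "\<dots> = (\<Sum>k. ennreal (if i \<le> sigma_a a k then \<bar>a (sigma_a a k)\<bar> powr p * w k else 0))"
    using inj_sigma_a[OF assms] by (simp add: H_def w_inv_def cong: if_cong)
  finally show ?thesis .
qed

lemma pw_normp_le_trunc_plus_sorted_tail:
  fixes a :: "nat \<Rightarrow> real"
  assumes a0: "a \<longlonglongrightarrow> 0" and "0 \<le> p" and "decseq w" and "\<And>k. 0 \<le> w k"
  shows "pw_normp p w a \<le> pw_normp p w (trunc i a)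
    + (\<Sum>k. ennreal (if i \<le> sigma_a a k then \<bar>a (sigma_a a k)\<bar> powr p * w k else 0))"
proof -
  let ?s = "sigma_a a" and ?t = "trunc i a"
  define c where "c k = (if ?s k < i then \<bar>a (?s k)\<bar> powr p else 0)" for k
  have "pw_normp p w a
      = (\<Sum>k. ennreal (c k * w k + (if i \<le> ?s k then \<bar>a (?s k)\<bar> powr p * w k else 0)))"
    unfolding pw_normp_eq_sorted[OF a0 assms(2-4)] by (intro suminf_cong) (simp add: c_def)
  also have "\<dots> = (\<Sum>k. ennreal (c k * w k))
      + (\<Sum>k. ennreal (if i \<le> ?s k then \<bar>a (?s k)\<bar> powr p * w k else 0))"
    by (rule suminf_ennreal_add) (simp_all add: c_def assms(4))
  also have "(\<Sum>k. ennreal (c k * w k)) \<le> (\<Sum>k. ennreal (\<bar>?t (sigma_a ?t k)\<bar> powr p * w k))"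
  proof (rule suminf_weighted_le_if_partial_sums_le[OF assms(3,4)])
    fix m
    let ?Q = "{k \<in> {..<m}. ?s k < i}"
    have "(\<Sum>k<m. c k) = (\<Sum>k\<in>?Q. \<bar>?t (?s k)\<bar> powr p)"
      by (subst sum.inter_filter) (simp_all add: c_def trunc_def cong: if_cong)
    also have "\<dots> = (\<Sum>j\<in>?s ` ?Q. \<bar>?t j\<bar> powr p)"
      using inj_sigma_a[OF a0] by (simp add: sum.reindex inj_on_subset)
    also have "\<dots> \<le> (\<Sum>k<m. \<bar>?t (sigma_a ?t k)\<bar> powr p)"
      using card_image_le[of ?Q ?s] card_mono[of "{..<m}" ?Q]
      by (intro sum_powr_le_sorted_prefix[OF trunc_tendsto_zero \<open>0 \<le> p\<close>]) force+
    finally show "(\<Sum>k<m. c k) \<le> (\<Sum>k<m. \<bar>?t (sigma_a ?t k)\<bar> powr p)" .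
  qed (simp_all add: c_def)
  also have "(\<Sum>k. ennreal (\<bar>?t (sigma_a ?t k)\<bar> powr p * w k)) = pw_normp p w ?t"
    by (rule pw_normp_eq_sorted[OF trunc_tendsto_zero assms(2-4), symmetric])
  finally show ?thesis
    by (simp add: add_right_mono)
qed

definition equinormed_normp :: "real \<Rightarrow> (nat \<Rightarrow> real) \<Rightarrow> (nat \<Rightarrow> real) set \<Rightarrow> bool" where
  "equinormed_normp p w A \<longleftrightarrow>
     (\<forall>\<epsilon>>0. \<exists>i. \<forall>a\<in>A. pw_normp p w a \<le> pw_normp p w (trunc i a) + ennreal \<epsilon>)"

definition uniformly_small_tails :: "real \<Rightarrow> (nat \<Rightarrow> real) \<Rightarrow> (nat \<Rightarrow> real) set \<Rightarrow> bool" where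
  "uniformly_small_tails p w A \<longleftrightarrow>
     (\<forall>\<epsilon>>0. \<exists>N. \<forall>a\<in>A. \<forall>i\<ge>N.
        (\<Sum>j. ennreal (\<bar>a (j + i)\<bar> powr p * w_inv w a (j + i))) < ennreal \<epsilon>)"

lemma equinormed_normp_if_uniformly_small_tails:
  assumes "0 < p" and "weight_seq w" and "A \<subseteq> Lpw p w" and "uniformly_small_tails p w A"
  shows "equinormed_normp p w A"
  unfolding equinormed_normp_def
proof (intro allI impI)
  fix \<epsilon> :: real
  assume "0 < \<epsilon>"
  then obtain N where N: "\<And>a. a \<in> A \<Longrightarrow>
      (\<Sum>j. ennreal (\<bar>a (j + N)\<bar> powr p * w_inv w a (j + N))) < ennreal \<epsilon>"
    using assms(4) unfolding uniformly_small_tails_def by blast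
  have "pw_normp p w a \<le> pw_normp p w (trunc N a) + ennreal \<epsilon>" if "a \<in> A" for a
  proof -
    have a0: "a \<longlonglongrightarrow> 0"
      using Lpw_imp_tendsto_zero[OF assms(2,1)] assms(3) that by blast
    have "pw_normp p w a \<le> pw_normp p w (trunc N a)
        + (\<Sum>k. ennreal (if N \<le> sigma_a a k then \<bar>a (sigma_a a k)\<bar> powr p * w k else 0))"
      using \<open>0 < p\<close> weight_seqD[OF assms(2)]
      by (intro pw_normp_le_trunc_plus_sorted_tail[OF a0]) (auto intro: less_imp_le)
    also have "\<dots> = pw_normp p w (trunc N a)
        + (\<Sum>j. ennreal (\<bar>a (j + N)\<bar> powr p * w_inv w a (j + N)))"
      by (simp add: tail_sum_eq_sorted_tail[OF a0])
    also have "\<dots> \<le> pw_normp p w (trunc N a) + ennreal \<epsilon>"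
      using N[OF that] by (intro add_left_mono less_imp_le)
    finally show ?thesis .
  qed
  then show "\<exists>i. \<forall>a\<in>A. pw_normp p w a \<le> pw_normp p w (trunc i a) + ennreal \<epsilon>"
    by blast
qed

section \<open>Tails of equinormed sets\<close>

lemma lessThan_eq_Un_shifted:
  fixes m i :: nat
  shows "{..<m} = {..<min m i} \<union> (\<lambda>r. r + i) ` {..<m - i}"
proof (intro set_eqI iffI)
  fix x
  assume "x \<in> {..<m}"
  then show "x \<in> {..<min m i} \<union> (\<lambda>r. r + i) ` {..<m - i}"
    by (cases "x < i") (auto intro!: image_eqI[of _ _ "x - i"])
qed auto

lemma prefix_sum_trunc_then_shifted_le:
  fixes a y :: "nat \<Rightarrow> real"
  assumes a0: "a \<longlonglongrightarrow> 0" and "0 \<le> p"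
    and y_le: "\<And>r. y r \<le> (if i \<le> sigma_a a r then \<bar>a (sigma_a a r)\<bar> powr p else 0)"
  shows "(\<Sum>k<m. if k < i then \<bar>trunc i a (sigma_a (trunc i a) k)\<bar> powr p else y (k - i))
    \<le> (\<Sum>k<m. \<bar>a (sigma_a a k)\<bar> powr p)"
proof -
  let ?s = "sigma_a a" and ?s' = "sigma_a (trunc i a)"
  let ?c = "\<lambda>k. if k < i then \<bar>trunc i a (?s' k)\<bar> powr p else y (k - i)"
  define Q1 where "Q1 = {k \<in> {..<min m i}. ?s' k < i}"
  define Q2 where "Q2 = {r \<in> {..<m - i}. i \<le> ?s r}"
  have "(\<Sum>k<m. ?c k) = (\<Sum>k<min m i. ?c k) + (\<Sum>k\<in>(\<lambda>r. r + i) ` {..<m - i}. ?c k)"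
    unfolding lessThan_eq_Un_shifted[of m i] by (rule sum.union_disjoint) auto
  also have "(\<Sum>k<min m i. ?c k) = (\<Sum>k<min m i. if ?s' k < i then \<bar>a (?s' k)\<bar> powr p else 0)"
    by (intro sum.cong) (auto simp: trunc_def)
  also have "\<dots> = (\<Sum>k\<in>Q1. \<bar>a (?s' k)\<bar> powr p)"
    unfolding Q1_def by (rule sum.inter_filter[symmetric]) simp
  also have "(\<Sum>k\<in>(\<lambda>r. r + i) ` {..<m - i}. ?c k) = (\<Sum>r<m - i. y r)"
    by (subst sum.reindex) auto
  also have "\<dots> \<le> (\<Sum>r<m - i. if i \<le> ?s r then \<bar>a (?s r)\<bar> powr p else 0)"
    by (intro sum_mono y_le)
  also have "\<dots> = (\<Sum>r\<in>Q2. \<bar>a (?s r)\<bar> powr p)"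
    unfolding Q2_def by (rule sum.inter_filter[symmetric]) simp
  also have "(\<Sum>k\<in>Q1. \<bar>a (?s' k)\<bar> powr p) + (\<Sum>r\<in>Q2. \<bar>a (?s r)\<bar> powr p)
      = (\<Sum>j\<in>?s' ` Q1 \<union> ?s ` Q2. \<bar>a j\<bar> powr p)"
  proof -
    have "?s' ` Q1 \<inter> ?s ` Q2 = {}"
      by (auto simp: Q1_def Q2_def)
    moreover have "inj_on ?s' Q1" and "inj_on ?s Q2"
      using inj_sigma_a[OF a0] inj_sigma_a[OF trunc_tendsto_zero[of i a]]
      by (auto intro: inj_on_subset)
    ultimately show ?thesis
      by (simp add: sum.union_disjoint sum.reindex Q1_def Q2_def)
  qed
  also have "\<dots> \<le> (\<Sum>k<m. \<bar>a (?s k)\<bar> powr p)"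
  proof (rule sum_powr_le_sorted_prefix[OF a0 \<open>0 \<le> p\<close>])
    show "finite (?s' ` Q1 \<union> ?s ` Q2)"
      by (simp add: Q1_def Q2_def)
    have "card (?s' ` Q1 \<union> ?s ` Q2) \<le> card Q1 + card Q2"
      by (intro order.trans[OF card_Un_le] add_mono card_image_le) (simp_all add: Q1_def Q2_def)
    also have "\<dots> \<le> card {..<min m i} + card {..<m - i}"
      by (intro add_mono card_mono) (auto simp: Q1_def Q2_def)
    finally show "card (?s' ` Q1 \<union> ?s ` Q2) \<le> m"
      by simp
  qed
  finally show ?thesis
    by simp
qed

lemma pw_normp_trunc_plus_shifted_tail_le:
  fixes a y :: "nat \<Rightarrow> real"
  assumes a0: "a \<longlonglongrightarrow> 0" and "0 \<le> p" and "decseq w" and "\<And>k. 0 \<le> w k"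
    and "\<And>r. 0 \<le> y r"
    and "\<And>r. y r \<le> (if i \<le> sigma_a a r then \<bar>a (sigma_a a r)\<bar> powr p else 0)"
  shows "pw_normp p w (trunc i a) + (\<Sum>r. ennreal (y r * w (r + i))) \<le> pw_normp p w a"
proof -
  let ?t = "trunc i a"
  define c where "c k = (if k < i then \<bar>?t (sigma_a ?t k)\<bar> powr p else y (k - i))" for k
  have "(\<Sum>k. ennreal (c k * w k)) = (\<Sum>k. ennreal (c (k + i) * w (k + i))) + (\<Sum>k<i. ennreal (c k * w k))"
    by (intro suminf_offset summableI)
  also have "\<dots> = pw_normp p w ?t + (\<Sum>r. ennreal (y r * w (r + i)))"
    by (simp add: c_def pw_normp_trunc_eq_sum[OF assms(2-4)] add.commute)
  finally have "pw_normp p w ?t + (\<Sum>r. ennreal (y r * w (r + i))) = (\<Sum>k. ennreal (c k * w k))"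
    by simp
  also have "\<dots> \<le> (\<Sum>k. ennreal (\<bar>a (sigma_a a k)\<bar> powr p * w k))"
    using assms(5) prefix_sum_trunc_then_shifted_le[OF a0 assms(2,6)]
    by (intro suminf_weighted_le_if_partial_sums_le[OF assms(3,4)]) (simp_all add: c_def)
  also have "\<dots> = pw_normp p w a"
    by (rule pw_normp_eq_sorted[OF assms(1-4), symmetric])
  finally show ?thesis .
qed

lemma suminf_weight_shift_diff_le:
  fixes w :: "nat \<Rightarrow> real"
  assumes "decseq w" and "\<And>k. 0 \<le> w k" and "\<And>k. w k \<le> 1" and "0 \<le> \<gamma>"
  shows "(\<Sum>k. ennreal (\<gamma> * (w k - w (k + i)))) \<le> ennreal (\<gamma> * i)"
  unfolding suminf_eq_SUP
proof (rule SUP_least)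
  fix n
  have "(\<Sum>k<n. w k) \<le> (\<Sum>k<n + i. w k)"
    by (intro sum_mono2) (auto simp: assms(2))
  also have "\<dots> = (\<Sum>k<i. w k) + (\<Sum>k<n. w (k + i))"
    by (induction n) (simp_all add: ac_simps)
  finally have "(\<Sum>k<n. w k - w (k + i)) \<le> (\<Sum>k<i. w k)"
    by (simp add: sum_subtractf)
  also have "\<dots> \<le> i"
    using sum_bounded_above[of "{..<i}" w 1] assms(3) by simp
  finally have "(\<Sum>k<n. \<gamma> * (w k - w (k + i))) \<le> \<gamma> * i"
    using assms(4) by (simp add: sum_distrib_left[symmetric] mult_left_mono)
  moreover have "\<And>k. 0 \<le> \<gamma> * (w k - w (k + i))"
    using assms(1,4) by (simp add: decseqD)
  ultimately show "(\<Sum>k<n. ennreal (\<gamma> * (w k - w (k + i)))) \<le> ennreal (\<gamma> * i)"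
    by (simp add: sum_ennreal ennreal_leI)
qed

lemma capped_sorted_tail_le:
  fixes a :: "nat \<Rightarrow> real"
  assumes a0: "a \<longlonglongrightarrow> 0" and "0 \<le> p" and "decseq w" and "\<And>k. 0 \<le> w k"
    and "\<And>k. w k \<le> 1" and "0 \<le> \<gamma>" and "j \<le> i"
    and defect: "pw_normp p w a \<le> pw_normp p w (trunc j a) + ennreal e"
    and finite: "pw_normp p w (trunc j a) \<noteq> \<infinity>"
  shows "(\<Sum>k. ennreal (if i \<le> sigma_a a k then min (\<bar>a (sigma_a a k)\<bar> powr p) \<gamma> * w k else 0))
    \<le> ennreal e + ennreal (\<gamma> * j)"
proof -
  define y where "y k = (if i \<le> sigma_a a k then min (\<bar>a (sigma_a a k)\<bar> powr p) \<gamma> else 0)" for k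
  have y: "0 \<le> y k" "y k \<le> \<gamma>" for k
    using \<open>0 \<le> \<gamma>\<close> by (simp_all add: y_def)
  have w_diff: "0 \<le> w k - w (k + j)" for k
    using assms(3) by (simp add: decseqD)
  have "(\<Sum>k. ennreal (if i \<le> sigma_a a k then min (\<bar>a (sigma_a a k)\<bar> powr p) \<gamma> * w k else 0))
      = (\<Sum>k. ennreal (y k * w (k + j) + y k * (w k - w (k + j))))"
    by (intro suminf_cong) (simp add: y_def algebra_simps)
  also have "\<dots> \<le> (\<Sum>k. ennreal (y k * w (k + j) + \<gamma> * (w k - w (k + j))))"
    using y w_diff by (intro suminf_le ennreal_leI add_left_mono mult_right_mono) auto
  also have "\<dots> = (\<Sum>k. ennreal (y k * w (k + j))) + (\<Sum>k. ennreal (\<gamma> * (w k - w (k + j))))"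
    using y w_diff assms(4) \<open>0 \<le> \<gamma>\<close> by (intro suminf_ennreal_add) auto
  also have "\<dots> \<le> ennreal e + ennreal (\<gamma> * j)"
  proof (rule add_mono)
    have "pw_normp p w (trunc j a) + (\<Sum>k. ennreal (y k * w (k + j))) \<le> pw_normp p w a"
      using y(1) \<open>j \<le> i\<close>
      by (intro pw_normp_trunc_plus_shifted_tail_le[OF a0 assms(2-4)]) (auto simp: y_def)
    with defect finite show "(\<Sum>k. ennreal (y k * w (k + j))) \<le> ennreal e"
      by (metis ennreal_add_left_cancel_le order.trans)
    show "(\<Sum>k. ennreal (\<gamma> * (w k - w (k + j)))) \<le> ennreal (\<gamma> * j)"
      by (rule suminf_weight_shift_diff_le[OF assms(3-6)])
  qed
  finally show ?thesis .
qed

lemma pw_normp_eq_plus_sorted_diff: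
  fixes a b :: "nat \<Rightarrow> real"
  assumes a0: "a \<longlonglongrightarrow> 0" and b0: "b \<longlonglongrightarrow> 0" and le: "\<And>j. \<bar>b j\<bar> \<le> \<bar>a j\<bar>"
    and "0 \<le> p" and "decseq w" and "\<And>k. 0 \<le> w k"
  shows "pw_normp p w a = pw_normp p w b
    + (\<Sum>k. ennreal ((\<bar>a (sigma_a a k)\<bar> powr p - \<bar>b (sigma_a b k)\<bar> powr p) * w k))"
proof -
  have diff: "0 \<le> \<bar>a (sigma_a a k)\<bar> powr p - \<bar>b (sigma_a b k)\<bar> powr p" for k
    using sorted_abs_le_if_abs_le[OF a0 b0 le] \<open>0 \<le> p\<close> by (simp add: powr_mono2)
  have "pw_normp p w a = (\<Sum>k. ennreal (\<bar>b (sigma_a b k)\<bar> powr p * w k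
      + (\<bar>a (sigma_a a k)\<bar> powr p - \<bar>b (sigma_a b k)\<bar> powr p) * w k))"
    unfolding pw_normp_eq_sorted[OF a0 assms(4-6)] by (intro suminf_cong) (simp add: algebra_simps)
  also have "\<dots> = pw_normp p w b
      + (\<Sum>k. ennreal ((\<bar>a (sigma_a a k)\<bar> powr p - \<bar>b (sigma_a b k)\<bar> powr p) * w k))"
    unfolding pw_normp_eq_sorted[OF b0 assms(4-6)] using diff assms(6)
    by (intro suminf_ennreal_add) auto
  finally show ?thesis .
qed

text \<open>The right-hand side no longer refers to the rearrangement, so \<open>a\<close> and its truncation
  can be compared through it.\<close>

lemma sum_sorted_excess_eq:
  fixes b :: "nat \<Rightarrow> real"
  assumes b0: "b \<longlonglongrightarrow> 0" and "0 \<le> p" and "0 \<le> \<gamma>" and small_K: "\<bar>b (sigma_a b K)\<bar> powr p \<le> \<gamma>"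
  shows "(\<Sum>k<K. if P (sigma_a b k) then max (\<bar>b (sigma_a b k)\<bar> powr p - \<gamma>) 0 else 0)
    = (\<Sum>j | \<gamma> < \<bar>b j\<bar> powr p \<and> P j. \<bar>b j\<bar> powr p - \<gamma>)"
proof -
  let ?s = "sigma_a b"
  have large_in_prefix: "{j. \<gamma> < \<bar>b j\<bar> powr p \<and> P j} \<subseteq> ?s ` {..<K}"
  proof
    fix j
    assume j: "j \<in> {j. \<gamma> < \<bar>b j\<bar> powr p \<and> P j}"
    then have "b j \<noteq> 0"
      using \<open>0 \<le> \<gamma>\<close> by auto
    then obtain k where k: "j = ?s k"
      using nonzero_in_range_sigma_a[OF b0] by blast
    have "k < K"
    proof (rule ccontr)
      assume "\<not> k < K"
      then have "\<bar>b (?s k)\<bar> powr p \<le> \<bar>b (?s K)\<bar> powr p"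
        using \<open>0 \<le> p\<close> by (intro powr_mono2 sigma_a_antimono[OF b0]) auto
      with j k small_K show False
        by simp
    qed
    with k show "j \<in> ?s ` {..<K}"
      by blast
  qed
  have "(\<Sum>k<K. if P (?s k) then max (\<bar>b (?s k)\<bar> powr p - \<gamma>) 0 else 0)
      = (\<Sum>j\<in>?s ` {..<K}. if P j then max (\<bar>b j\<bar> powr p - \<gamma>) 0 else 0)"
    using inj_sigma_a[OF b0] by (simp add: sum.reindex inj_on_subset)
  also have "\<dots> = (\<Sum>j | \<gamma> < \<bar>b j\<bar> powr p \<and> P j. \<bar>b j\<bar> powr p - \<gamma>)"
    using large_in_prefix by (intro sum.mono_neutral_cong_right) auto
  finally show ?thesis .
qed

lemma sorted_excess_le_sorted_diff_trunc:
  fixes a :: "nat \<Rightarrow> real"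
  assumes a0: "a \<longlonglongrightarrow> 0" and "0 \<le> p" and "0 \<le> \<gamma>" and small_K: "\<bar>a (sigma_a a K)\<bar> powr p \<le> \<gamma>"
  shows "(\<Sum>k<K. if j \<le> sigma_a a k then max (\<bar>a (sigma_a a k)\<bar> powr p - \<gamma>) 0 else 0)
    \<le> (\<Sum>k<K. \<bar>a (sigma_a a k)\<bar> powr p - \<bar>trunc j a (sigma_a (trunc j a) k)\<bar> powr p)"
proof -
  let ?s = "sigma_a a" and ?t = "trunc j a"
  define f where "f k = \<bar>a (?s k)\<bar> powr p" for k
  define f' where "f' k = \<bar>?t (sigma_a ?t k)\<bar> powr p" for k
  have f'_le: "f' k \<le> f k" for k
    unfolding f_def f'_def using \<open>0 \<le> p\<close>
    by (intro powr_mono2 sorted_abs_le_if_abs_le[OF a0 trunc_tendsto_zero abs_trunc_le]) auto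
  have head: "(\<Sum>k<K. if ?s k < j then max (f k - \<gamma>) 0 else 0) = (\<Sum>k<K. max (f' k - \<gamma>) 0)"
  proof -
    have "(\<Sum>k<K. if ?s k < j then max (f k - \<gamma>) 0 else 0)
        = (\<Sum>l | \<gamma> < \<bar>a l\<bar> powr p \<and> l < j. \<bar>a l\<bar> powr p - \<gamma>)"
      unfolding f_def by (rule sum_sorted_excess_eq[OF a0 assms(2-4)])
    also have "\<dots> = (\<Sum>l | \<gamma> < \<bar>?t l\<bar> powr p \<and> True. \<bar>?t l\<bar> powr p - \<gamma>)"
      using \<open>0 \<le> \<gamma>\<close> by (intro sum.cong) (auto simp: trunc_def)
    also have "\<dots> = (\<Sum>k<K. if True then max (f' k - \<gamma>) 0 else 0)"
      unfolding f'_def using f'_le[of K] small_K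
      by (intro sum_sorted_excess_eq[symmetric] trunc_tendsto_zero assms(2,3)) (simp add: f_def f'_def)
    finally show ?thesis
      by simp
  qed
  have "(\<Sum>k<K. max (f k - \<gamma>) 0)
      = (\<Sum>k<K. if ?s k < j then max (f k - \<gamma>) 0 else 0)
        + (\<Sum>k<K. if j \<le> ?s k then max (f k - \<gamma>) 0 else 0)"
    unfolding sum.distrib[symmetric] by (intro sum.cong) auto
  then have "(\<Sum>k<K. if j \<le> ?s k then max (f k - \<gamma>) 0 else 0)
      = (\<Sum>k<K. max (f k - \<gamma>) 0 - max (f' k - \<gamma>) 0)"
    by (simp add: head sum_subtractf)
  also have "\<dots> \<le> (\<Sum>k<K. f k - f' k)"
    using f'_le by (intro sum_mono) (smt (verit))
  finally show ?thesis
    unfolding f_def f'_def .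
qed

lemma sorted_excess_le_if_defect_le:
  fixes a :: "nat \<Rightarrow> real"
  assumes a0: "a \<longlonglongrightarrow> 0" and "0 \<le> p" and "decseq w" and "\<And>k. 0 \<le> w k"
    and "0 < w K" and "0 \<le> \<gamma>" and "0 \<le> e"
    and small_K: "\<bar>a (sigma_a a K)\<bar> powr p \<le> \<gamma>"
    and defect: "pw_normp p w a \<le> pw_normp p w (trunc j a) + ennreal (w K * e)"
    and finite: "pw_normp p w (trunc j a) \<noteq> \<infinity>"
  shows "(\<Sum>k<K. if j \<le> sigma_a a k then max (\<bar>a (sigma_a a k)\<bar> powr p - \<gamma>) 0 else 0) \<le> e"
proof -
  let ?s = "sigma_a a" and ?t = "trunc j a"
  define D where "D k = \<bar>a (?s k)\<bar> powr p - \<bar>?t (sigma_a ?t k)\<bar> powr p" for k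
  define Z where "Z = (\<Sum>k<K. if j \<le> ?s k then max (\<bar>a (?s k)\<bar> powr p - \<gamma>) 0 else 0)"
  have D: "0 \<le> D k" for k
    unfolding D_def using \<open>0 \<le> p\<close>
    by (simp add: powr_mono2 sorted_abs_le_if_abs_le[OF a0 trunc_tendsto_zero abs_trunc_le])
  have "ennreal (w K * Z) \<le> ennreal (\<Sum>k<K. D k * w k)"
  proof (rule ennreal_leI)
    have "w K * Z \<le> w K * (\<Sum>k<K. D k)"
      unfolding Z_def D_def using sorted_excess_le_sorted_diff_trunc[OF a0 assms(2,6) small_K] \<open>0 < w K\<close>
      by simp
    also have "\<dots> \<le> (\<Sum>k<K. D k * w k)"
      unfolding sum_distrib_left using D \<open>decseq w\<close>
      by (intro sum_mono) (simp add: decseqD mult_left_mono mult.commute)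
    finally show "w K * Z \<le> (\<Sum>k<K. D k * w k)" .
  qed
  also have "\<dots> = (\<Sum>k<K. ennreal (D k * w k))"
    using D assms(4) by (intro sum_ennreal[symmetric]) simp
  also have "\<dots> \<le> (\<Sum>k. ennreal (D k * w k))"
    by (intro sum_le_suminf summableI) auto
  also have "\<dots> \<le> ennreal (w K * e)"
  proof -
    have "pw_normp p w ?t + (\<Sum>k. ennreal (D k * w k)) = pw_normp p w a"
      unfolding D_def
      by (rule pw_normp_eq_plus_sorted_diff[OF a0 trunc_tendsto_zero abs_trunc_le assms(2-4), symmetric])
    with defect finite show ?thesis
      by (metis ennreal_add_left_cancel_le infinity_ennreal_def)
  qed
  finally show ?thesis
    using \<open>0 < w K\<close> \<open>0 \<le> e\<close> by (simp add: Z_def ennreal_le_iff)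
qed

lemma excess_sorted_tail_le:
  fixes a :: "nat \<Rightarrow> real"
  assumes a0: "a \<longlonglongrightarrow> 0" and "0 \<le> p" and "\<And>k. 0 \<le> w k" and "\<And>k. w k \<le> 1"
    and "j \<le> i" and small_K: "\<bar>a (sigma_a a K)\<bar> powr p \<le> \<gamma>"
    and excess: "(\<Sum>k<K. if j \<le> sigma_a a k then max (\<bar>a (sigma_a a k)\<bar> powr p - \<gamma>) 0 else 0) \<le> e"
  shows "(\<Sum>k. ennreal (if i \<le> sigma_a a k then max (\<bar>a (sigma_a a k)\<bar> powr p - \<gamma>) 0 * w k else 0))
    \<le> ennreal e"
proof -
  let ?s = "sigma_a a"
  have "(\<Sum>k. ennreal (if i \<le> ?s k then max (\<bar>a (?s k)\<bar> powr p - \<gamma>) 0 * w k else 0))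
      = (\<Sum>k<K. ennreal (if i \<le> ?s k then max (\<bar>a (?s k)\<bar> powr p - \<gamma>) 0 * w k else 0))"
  proof (rule suminf_finite)
    fix k :: nat
    assume "k \<notin> {..<K}"
    then have "\<bar>a (?s k)\<bar> powr p \<le> \<bar>a (?s K)\<bar> powr p"
      using \<open>0 \<le> p\<close> by (intro powr_mono2 sigma_a_antimono[OF a0]) auto
    with small_K have "\<bar>a (?s k)\<bar> powr p \<le> \<gamma>"
      by linarith
    then show "ennreal (if i \<le> ?s k then max (\<bar>a (?s k)\<bar> powr p - \<gamma>) 0 * w k else 0) = 0"
      by simp
  qed simp
  also have "\<dots> \<le> ennreal (\<Sum>k<K. if j \<le> ?s k then max (\<bar>a (?s k)\<bar> powr p - \<gamma>) 0 else 0)"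
    using assms(3,4) \<open>j \<le> i\<close>
    by (subst sum_ennreal[symmetric]) (auto intro!: sum_mono ennreal_leI mult_left_le)
  also have "\<dots> \<le> ennreal e"
    using excess by (rule ennreal_leI)
  finally show ?thesis .
qed

lemma sorted_powr_le_if_pw_normp_le:
  fixes a :: "nat \<Rightarrow> real"
  assumes a0: "a \<longlonglongrightarrow> 0" and "0 \<le> p" and "decseq w" and "\<And>k. 0 \<le> w k"
    and "pw_normp p w a \<le> ennreal B" and "0 \<le> B" and "B < \<gamma> * (\<Sum>k<K. w k)"
  shows "\<bar>a (sigma_a a K)\<bar> powr p \<le> \<gamma>"
proof -
  let ?f = "\<lambda>k. \<bar>a (sigma_a a k)\<bar> powr p"
  have "?f K * (\<Sum>k<K. w k) = (\<Sum>k<K. ?f K * w k)"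
    by (simp add: sum_distrib_left)
  also have "\<dots> \<le> (\<Sum>k<K. ?f k * w k)"
  proof (rule sum_mono)
    fix k
    assume "k \<in> {..<K}"
    then have "?f K \<le> ?f k"
      using \<open>0 \<le> p\<close> by (intro powr_mono2 sigma_a_antimono[OF a0]) auto
    then show "?f K * w k \<le> ?f k * w k"
      using assms(4) by (rule mult_right_mono)
  qed
  also have "\<dots> \<le> B"
  proof -
    have "ennreal (\<Sum>k<K. ?f k * w k) = (\<Sum>k<K. ennreal (?f k * w k))"
      using assms(4) by (intro sum_ennreal[symmetric]) simp
    also have "\<dots> \<le> (\<Sum>k. ennreal (?f k * w k))"
      by (intro sum_le_suminf summableI) auto
    also have "\<dots> \<le> ennreal B"
      using assms(5) by (simp add: pw_normp_eq_sorted[OF a0 assms(2-4)])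
    finally show ?thesis
      using \<open>0 \<le> B\<close> by (simp add: ennreal_le_iff)
  qed
  also have "\<dots> < \<gamma> * (\<Sum>k<K. w k)"
    by fact
  finally have "?f K * (\<Sum>k<K. w k) < \<gamma> * (\<Sum>k<K. w k)" .
  moreover have "0 < (\<Sum>k<K. w k)"
  proof (rule ccontr)
    assume "\<not> 0 < (\<Sum>k<K. w k)"
    then have "(\<Sum>k<K. w k) = 0"
      using sum_nonneg[of "{..<K}" w] assms(4) by force
    with assms(6,7) show False
      by simp
  qed
  ultimately show ?thesis
    by simp
qed

lemma sorted_tail_le_if_defects_le:
  fixes a :: "nat \<Rightarrow> real"
  assumes a0: "a \<longlonglongrightarrow> 0" and "0 \<le> p" and "decseq w" and "\<And>k. 0 \<le> w k" and "\<And>k. w k \<le> 1"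
    and "0 < w K" and "0 \<le> \<gamma>" and "0 \<le> e" and "i1 \<le> i" and "i2 \<le> i"
    and small_K: "\<bar>a (sigma_a a K)\<bar> powr p \<le> \<gamma>"
    and defect1: "pw_normp p w a \<le> pw_normp p w (trunc i1 a) + ennreal e"
    and defect2: "pw_normp p w a \<le> pw_normp p w (trunc i2 a) + ennreal (w K * e)"
    and finite: "pw_normp p w a \<noteq> \<infinity>"
  shows "(\<Sum>k. ennreal (if i \<le> sigma_a a k then \<bar>a (sigma_a a k)\<bar> powr p * w k else 0))
    \<le> ennreal e + ennreal (\<gamma> * i1) + ennreal e"
proof -
  let ?f = "\<lambda>k. \<bar>a (sigma_a a k)\<bar> powr p"
  have finite_trunc: "pw_normp p w (trunc j a) \<noteq> \<infinity>" for j
    using pw_normp_trunc_le[of p w j a] assms(2,4) finite by (auto simp: top_unique)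
  have "(if i \<le> sigma_a a k then ?f k * w k else 0)
      = (if i \<le> sigma_a a k then min (?f k) \<gamma> * w k else 0)
        + (if i \<le> sigma_a a k then max (?f k - \<gamma>) 0 * w k else 0)" for k
    by (simp add: min_def max_def algebra_simps)
  then have "(\<Sum>k. ennreal (if i \<le> sigma_a a k then ?f k * w k else 0))
      = (\<Sum>k. ennreal (if i \<le> sigma_a a k then min (?f k) \<gamma> * w k else 0))
        + (\<Sum>k. ennreal (if i \<le> sigma_a a k then max (?f k - \<gamma>) 0 * w k else 0))"
    using \<open>0 \<le> \<gamma>\<close> assms(4) by (simp only:) (intro suminf_ennreal_add; simp)
  also have "\<dots> \<le> (ennreal e + ennreal (\<gamma> * i1)) + ennreal e"
  proof (rule add_mono)
    show "(\<Sum>k. ennreal (if i \<le> sigma_a a k then min (?f k) \<gamma> * w k else 0))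
        \<le> ennreal e + ennreal (\<gamma> * i1)"
      by (rule capped_sorted_tail_le[OF a0 assms(2-5,7,9) defect1 finite_trunc])
    have "(\<Sum>k<K. if i2 \<le> sigma_a a k then max (?f k - \<gamma>) 0 else 0) \<le> e"
      by (rule sorted_excess_le_if_defect_le[OF a0 assms(2-4,6-8) small_K defect2 finite_trunc])
    then show "(\<Sum>k. ennreal (if i \<le> sigma_a a k then max (?f k - \<gamma>) 0 * w k else 0)) \<le> ennreal e"
      by (rule excess_sorted_tail_le[OF a0 assms(2,4,5,10) small_K])
  qed
  finally show ?thesis .
qed

lemma uniformly_small_tails_if_equinormed_normp:
  assumes "0 < p" and "weight_seq w" and "A \<subseteq> Lpw p w" and "0 \<le> B"
    and bounded: "\<And>a. a \<in> A \<Longrightarrow> pw_normp p w a \<le> ennreal B"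
    and "equinormed_normp p w A"
  shows "uniformly_small_tails p w A"
  unfolding uniformly_small_tails_def
proof (intro allI impI)
  fix \<epsilon> :: real
  assume "0 < \<epsilon>"
  define e where "e = \<epsilon> / 4"
  have "0 < e"
    using \<open>0 < \<epsilon>\<close> by (simp add: e_def)
  have "0 \<le> p" and w_pos: "\<And>k. 0 < w k" and w_nonneg: "\<And>k. 0 \<le> w k"
    and w: "decseq w" "\<And>k. w k \<le> 1"
    using \<open>0 < p\<close> weight_seqD[OF assms(2)] by (auto intro: less_imp_le)
  obtain i1 where i1: "\<And>a. a \<in> A \<Longrightarrow> pw_normp p w a \<le> pw_normp p w (trunc i1 a) + ennreal e"
    using assms(6) \<open>0 < e\<close> unfolding equinormed_normp_def by blast
  define \<gamma> where "\<gamma> = e / (i1 + 1)"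
  have "0 < \<gamma>" and "\<gamma> * i1 \<le> e"
    using \<open>0 < e\<close> by (auto simp: \<gamma>_def field_simps)
  obtain K where K: "B < \<gamma> * (\<Sum>k<K. w k)"
  proof -
    have "\<exists>K. B / \<gamma> < (\<Sum>k<K. w k)"
      using summableI_nonneg_bounded[of w "B / \<gamma>"] w_nonneg weight_seqD(4)[OF assms(2)]
      by (meson not_le)
    with \<open>0 < \<gamma>\<close> that show ?thesis
      by (auto simp: pos_divide_less_eq mult.commute)
  qed
  obtain i2 where i2: "\<And>a. a \<in> A \<Longrightarrow> pw_normp p w a \<le> pw_normp p w (trunc i2 a) + ennreal (w K * e)"
    using assms(6) \<open>0 < e\<close> w_pos[of K] unfolding equinormed_normp_def by (meson mult_pos_pos)
  have "(\<Sum>j. ennreal (\<bar>a (j + i)\<bar> powr p * w_inv w a (j + i))) < ennreal \<epsilon>"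
    if "a \<in> A" and "max i1 i2 \<le> i" for a i
  proof -
    have a0: "a \<longlonglongrightarrow> 0"
      using Lpw_imp_tendsto_zero[OF assms(2,1)] assms(3) that(1) by blast
    have "(\<Sum>j. ennreal (\<bar>a (j + i)\<bar> powr p * w_inv w a (j + i)))
        = (\<Sum>k. ennreal (if i \<le> sigma_a a k then \<bar>a (sigma_a a k)\<bar> powr p * w k else 0))"
      by (rule tail_sum_eq_sorted_tail[OF a0])
    also have "\<dots> \<le> ennreal e + ennreal (\<gamma> * i1) + ennreal e"
    proof (rule sorted_tail_le_if_defects_le[OF a0 \<open>0 \<le> p\<close> w(1) w_nonneg w(2) w_pos[of K]])
      show "0 \<le> \<gamma>" and "0 \<le> e" and "i1 \<le> i" and "i2 \<le> i"
        using \<open>0 < \<gamma>\<close> \<open>0 < e\<close> that(2) by simp_all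
      show "\<bar>a (sigma_a a K)\<bar> powr p \<le> \<gamma>"
        by (rule sorted_powr_le_if_pw_normp_le[OF a0 \<open>0 \<le> p\<close> w(1) w_nonneg bounded[OF that(1)] \<open>0 \<le> B\<close> K])
      show "pw_normp p w a \<noteq> \<infinity>"
        using bounded[OF that(1)] by (metis ennreal_less_top infinity_ennreal_def leD order.strict_trans1)
    qed (use i1[OF that(1)] i2[OF that(1)] in simp_all)
    also have "\<dots> < ennreal \<epsilon>"
      using \<open>\<gamma> * i1 \<le> e\<close> \<open>0 < e\<close> \<open>0 < \<gamma>\<close> by (simp flip: ennreal_plus add: ennreal_less_iff e_def)
    finally show ?thesis .
  qed
  then show "\<exists>N. \<forall>a\<in>A. \<forall>i\<ge>N. (\<Sum>j. ennreal (\<bar>a (j + i)\<bar> powr p * w_inv w a (j + i))) < ennreal \<epsilon>"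
    by blast
qed

section \<open>Equinormedness in terms of \<open>p\<close>-th powers\<close>

lemma powr_add_le_add_powr:
  fixes x y q :: real
  assumes "0 \<le> x" and "0 \<le> y" and "0 < q" and "q \<le> 1"
  shows "(x + y) powr q \<le> x powr q + y powr q"
proof (cases "x + y = 0")
  case True
  with assms show ?thesis
    by simp
next
  case False
  define s where "s = x + y"
  have "0 < s"
    using assms False by (simp add: s_def)
  have "x / s \<le> (x / s) powr q" and "y / s \<le> (y / s) powr q"
    using powr_mono'[of q 1 "x / s"] powr_mono'[of q 1 "y / s"] assms \<open>0 < s\<close>
    by (simp_all add: s_def)
  moreover have "x / s + y / s = 1"
    using \<open>0 < s\<close> by (simp add: s_def add_divide_distrib[symmetric])
  ultimately have "s powr q * 1 \<le> s powr q * ((x / s) powr q + (y / s) powr q)"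
    by (intro mult_left_mono) auto
  also have "\<dots> = x powr q + y powr q"
    using assms \<open>0 < s\<close> by (simp add: powr_divide distrib_left)
  finally show ?thesis
    by (simp add: s_def)
qed

lemma uniform_approx_powr_if_uniform_approx:
  fixes x :: "'a \<Rightarrow> real" and y :: "'i \<Rightarrow> 'a \<Rightarrow> real"
  assumes "0 < p" and y_nonneg: "\<And>i a. a \<in> A \<Longrightarrow> 0 \<le> y i a"
    and y_le: "\<And>i a. a \<in> A \<Longrightarrow> y i a \<le> x a" and x_le: "\<And>a. a \<in> A \<Longrightarrow> x a \<le> C"
    and approx: "\<forall>\<epsilon>>0. \<exists>i. \<forall>a\<in>A. x a \<le> y i a + \<epsilon>"
  shows "\<forall>\<epsilon>>0. \<exists>i. \<forall>a\<in>A. x a powr p \<le> y i a powr p + \<epsilon>"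
proof (intro allI impI)
  fix \<epsilon> :: real
  assume "0 < \<epsilon>"
  have "uniformly_continuous_on {0..C} (\<lambda>t. t powr p)"
    using \<open>0 < p\<close> by (intro compact_uniformly_continuous continuous_on_powr' continuous_intros) auto
  then obtain d where "0 < d" and d: "\<And>s t. s \<in> {0..C} \<Longrightarrow> t \<in> {0..C} \<Longrightarrow> dist t s < d
      \<Longrightarrow> dist (t powr p) (s powr p) < \<epsilon>"
    unfolding uniformly_continuous_on_def using \<open>0 < \<epsilon>\<close> by metis
  obtain i where i: "\<And>a. a \<in> A \<Longrightarrow> x a \<le> y i a + d / 2"
    using approx \<open>0 < d\<close> by (meson half_gt_zero)
  have "x a powr p \<le> y i a powr p + \<epsilon>" if "a \<in> A" for a
  proof -
    have "dist (x a) (y i a) < d"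
      using i[OF that] y_le[OF that] \<open>0 < d\<close> by (simp add: dist_real_def)
    moreover have "y i a \<in> {0..C}" and "x a \<in> {0..C}"
      using y_nonneg[OF that, of i] y_le[OF that, of i] x_le[OF that] by auto
    ultimately have "dist (x a powr p) (y i a powr p) < \<epsilon>"
      by (intro d)
    then show ?thesis
      by (simp add: dist_real_def)
  qed
  then show "\<exists>i. \<forall>a\<in>A. x a powr p \<le> y i a powr p + \<epsilon>"
    by blast
qed

lemma uniform_approx_if_uniform_approx_powr:
  fixes x :: "'a \<Rightarrow> real" and y :: "'i \<Rightarrow> 'a \<Rightarrow> real"
  assumes "1 \<le> p" and y_nonneg: "\<And>i a. a \<in> A \<Longrightarrow> 0 \<le> y i a"
    and y_le: "\<And>i a. a \<in> A \<Longrightarrow> y i a \<le> x a"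
    and approx: "\<forall>\<epsilon>>0. \<exists>i. \<forall>a\<in>A. x a powr p \<le> y i a powr p + \<epsilon>"
  shows "\<forall>\<epsilon>>0. \<exists>i. \<forall>a\<in>A. x a \<le> y i a + \<epsilon>"
proof (intro allI impI)
  fix \<epsilon> :: real
  assume "0 < \<epsilon>"
  then have "0 < \<epsilon> powr p"
    by simp
  then obtain i where i: "\<And>a. a \<in> A \<Longrightarrow> x a powr p \<le> y i a powr p + \<epsilon> powr p"
    using approx by blast
  have "x a \<le> y i a + \<epsilon>" if "a \<in> A" for a
  proof -
    have "0 \<le> x a"
      using y_nonneg[OF that] y_le[OF that] by (rule order.trans)
    then have "x a = (x a powr p) powr (1 / p)"
      using \<open>1 \<le> p\<close> by (simp add: powr_powr)
    also have "\<dots> \<le> (y i a powr p + \<epsilon> powr p) powr (1 / p)"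
      using i[OF that] \<open>1 \<le> p\<close> by (intro powr_mono2) auto
    also have "\<dots> \<le> (y i a powr p) powr (1 / p) + (\<epsilon> powr p) powr (1 / p)"
      using \<open>1 \<le> p\<close> by (intro powr_add_le_add_powr) auto
    also have "\<dots> = y i a + \<epsilon>"
      using y_nonneg[OF that] \<open>0 < \<epsilon>\<close> \<open>1 \<le> p\<close> by (simp add: powr_powr)
    finally show ?thesis .
  qed
  then show "\<exists>i. \<forall>a\<in>A. x a \<le> y i a + \<epsilon>"
    by blast
qed

lemma pw_normp_eq_ennreal_pw_norm_powr:
  assumes "0 < p" and "a \<in> Lpw p w"
  shows "pw_normp p w a = ennreal (pw_norm p w a powr p)"
proof -
  have "pw_norm p w a powr p = enn2real (pw_normp p w a)"
    using \<open>0 < p\<close> by (simp add: pw_norm_def powr_powr)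
  with assms(2) show ?thesis
    by (simp add: Lpw_def ennreal_enn2real_if)
qed

lemma equinormed_iff_equinormed_normp:
  assumes "1 \<le> p" and w_nonneg: "\<And>k. 0 \<le> w k" and "A \<subseteq> Lpw p w"
    and "\<And>a. a \<in> A \<Longrightarrow> pw_norm p w a \<le> C"
  shows "equinormed p w A \<longleftrightarrow> equinormed_normp p w A"
proof -
  have "0 < p"
    using \<open>1 \<le> p\<close> by simp
  have trunc_le: "pw_normp p w (trunc i a) \<le> pw_normp p w a" for i a
    using \<open>0 < p\<close> by (intro pw_normp_trunc_le w_nonneg) simp
  have in_Lpw: "a \<in> Lpw p w" "trunc i a \<in> Lpw p w" if "a \<in> A" for a i
    using assms(3) that trunc_le[of i a] by (auto simp: Lpw_def)
  have normp_iff: "pw_normp p w a \<le> pw_normp p w (trunc i a) + ennreal \<epsilon>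
      \<longleftrightarrow> pw_norm p w a powr p \<le> pw_norm p w (trunc i a) powr p + \<epsilon>" if "a \<in> A" and "0 < \<epsilon>" for a i \<epsilon>
    using in_Lpw[OF that(1)] \<open>0 < \<epsilon>\<close>
    by (simp add: pw_normp_eq_ennreal_pw_norm_powr[OF \<open>0 < p\<close>] ennreal_le_iff flip: ennreal_plus)
  have "equinormed p w A \<longleftrightarrow> (\<forall>\<epsilon>>0. \<exists>i. \<forall>a\<in>A. pw_norm p w a \<le> pw_norm p w (trunc i a) + \<epsilon>)"
    by (simp add: equinormed_def pw_norm_i_eq_trunc)
  also have "\<dots> \<longleftrightarrow> (\<forall>\<epsilon>>0. \<exists>i. \<forall>a\<in>A. pw_norm p w a powr p \<le> pw_norm p w (trunc i a) powr p + \<epsilon>)"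
  proof -
    have nonneg: "0 \<le> pw_norm p w (trunc i a)" if "a \<in> A" for i a
      by (simp add: pw_norm_def)
    have le: "pw_norm p w (trunc i a) \<le> pw_norm p w a" if "a \<in> A" for i a
      unfolding pw_norm_def using in_Lpw[OF that] trunc_le[of i a] \<open>0 < p\<close>
      by (intro powr_mono2 enn2real_mono) (auto simp: Lpw_def)
    show ?thesis
    proof
      assume "\<forall>\<epsilon>>0. \<exists>i. \<forall>a\<in>A. pw_norm p w a \<le> pw_norm p w (trunc i a) + \<epsilon>"
      then show "\<forall>\<epsilon>>0. \<exists>i. \<forall>a\<in>A. pw_norm p w a powr p \<le> pw_norm p w (trunc i a) powr p + \<epsilon>"
        using nonneg le assms(4) \<open>0 < p\<close>
        by (intro uniform_approx_powr_if_uniform_approx[where y = "\<lambda>i a. pw_norm p w (trunc i a)"]) auto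
    next
      assume "\<forall>\<epsilon>>0. \<exists>i. \<forall>a\<in>A. pw_norm p w a powr p \<le> pw_norm p w (trunc i a) powr p + \<epsilon>"
      then show "\<forall>\<epsilon>>0. \<exists>i. \<forall>a\<in>A. pw_norm p w a \<le> pw_norm p w (trunc i a) + \<epsilon>"
        using nonneg le \<open>1 \<le> p\<close>
        by (intro uniform_approx_if_uniform_approx_powr[where y = "\<lambda>i a. pw_norm p w (trunc i a)"]) auto
    qed
  qed
  also have "\<dots> \<longleftrightarrow> equinormed_normp p w A"
    unfolding equinormed_normp_def Ball_def by (simp add: normp_iff)
  finally show ?thesis .
qed

theorem mainTheorem14:
  fixes p :: real and w :: "nat \<Rightarrow> real" and A :: "(nat \<Rightarrow> real) set"
  assumes "p \<ge> 1" and "weight_seq w"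
    and "A \<subseteq> Lpw p w"
    and "\<exists>C. \<forall>a\<in>A. pw_norm p w a \<le> C"
  shows "equinormed p w A \<longleftrightarrow>
    (\<forall>\<epsilon>>0. \<exists>N. \<forall>a\<in>A. \<forall>i\<ge>N.
       (\<Sum>j. ennreal (\<bar>a (j + i)\<bar> powr p * w_inv w a (j + i))) < ennreal \<epsilon>)"
proof -
  have "0 < p"
    using assms(1) by simp
  have w_nonneg: "\<And>k. 0 \<le> w k"
    using weight_seqD(1)[OF assms(2)] less_imp_le by blast
  obtain C where C: "\<And>a. a \<in> A \<Longrightarrow> pw_norm p w a \<le> C"
    using assms(4) by blast
  have bounded: "pw_normp p w a \<le> ennreal (max C 0 powr p)" if "a \<in> A" for a
  proof -
    have "pw_norm p w a powr p \<le> max C 0 powr p"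
      using C[OF that] \<open>0 < p\<close> by (intro powr_mono2) (auto simp: pw_norm_def)
    with assms(3) that show ?thesis
      by (auto simp: pw_normp_eq_ennreal_pw_norm_powr[OF \<open>0 < p\<close>] intro: ennreal_leI)
  qed
  have "equinormed p w A \<longleftrightarrow> equinormed_normp p w A"
    by (rule equinormed_iff_equinormed_normp[OF assms(1) w_nonneg assms(3) C])
  also have "\<dots> \<longleftrightarrow> uniformly_small_tails p w A"
    using uniformly_small_tails_if_equinormed_normp[OF \<open>0 < p\<close> assms(2,3) _ bounded]
      equinormed_normp_if_uniformly_small_tails[OF \<open>0 < p\<close> assms(2,3)]
    by auto
  finally show ?thesis
    unfolding uniformly_small_tails_def .
qed

end
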